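(* Under the setup in the context, assume in addition that the block GMRES residual $F_{j-1}^{(G)}$ has rank $L$. Then $\operatorname{rank}C_j=\operatorname{rank}\hat H_{jj}=\operatorname{rank}H_j-(j-1)L$.
   Context: Let $n,L\ge1$, $A\in\mathbb C^{n\times n}$, $B,X_0\in\mathbb C^{n\times L}$, $F_0=B-AX_0$, and let $F_0=V_1S_0$ be a reduced QR factorization ($V_1\in\mathbb C^{n\times L}$ with orthonormal columns, $S_0\in\mathbb C^{L\times L}$ upper triangular). Fix $j\ge2$. The block Arnoldi process (possibly with dependent basis vectors replaced by new orthonormal vectors) yields $W_k=[V_1,\dots,V_k]\in\mathbb C^{n\times kL}$ ($k\le j+1$) with orthonormal columns, $V_i\in\mathbb C^{n\times L}$, and the block Arnoldi relation $AW_j=W_{j+1}\bar H_j$, where $\bar H_j=(H_{ik})\in\mathbb C^{(j+1)L\times jL}$ has $L\times L$ blocks $H_{ik}$, is block upper Hessenberg ($H_{ik}=0$ for $i>k+1$), and each $H_{k+1,k}$ is upper triangular. For $k\le j$, $\bar H_k$ denotes the leading $(k+1)L\times kL$ submatrix of $\bar H_j$ and $H_k$ the leading $kL\times kL$ submatrix. $E^{[m]}\in\mathbb R^{mL\times L}$ denotes the first $L$ columns of $I_{mL}$. For $k\ge1$ with $\bar H_k$ of full column rank, the block GMRES iterate is $X_k^{(G)}=X_0+W_kY_k^{(G)}$, where $Y_k^{(G)}\in\mathbb C^{kL\times L}$ is the unique minimizer of $\|\bar H_kY-E^{[k+1]}S_0\|_F$ (Frobenius norm), and $F_k^{(G)}=B-AX_k^{(G)}$.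 Block QR factorization: assume $\bar H_j$ has full column rank. There are unitary matrices $\Omega_i=\begin{bmatrix}Q_i^{(11)}&Q_i^{(12)}\\Q_i^{(21)}&Q_i^{(22)}\end{bmatrix}\in\mathbb C^{2L\times 2L}$ ($i=1,\dots,j$, all four blocks $L\times L$); for $m\ge i+1$ put $Q_i^{(m)}=\mathrm{diag}(I_{(i-1)L},\Omega_i,I_{(m-i-1)L})\in\mathbb C^{mL\times mL}$ and $\bar Q_k=Q_k^{(k+1)}Q_{k-1}^{(k+1)}\cdots Q_1^{(k+1)}$. The $\Omega_i$ are chosen recursively so that $\bar Q_k\bar H_k=\begin{bmatrix}R_k\\ 0_{L\times kL}\end{bmatrix}$ with $R_k\in\mathbb C^{kL\times kL}$ upper triangular and nonsingular ($k=1,\dots,j$). In particular $Q_{j-1}^{(j+1)}\cdots Q_1^{(j+1)}\bar H_j=\begin{bmatrix}R_{j-1}&Z_j\\0&\hat H_{jj}\\0&H_{j+1,j}\end{bmatrix}$ for some $Z_j\in\mathbb C^{(j-1)L\times L}$, $\hat H_{jj}\in\mathbb C^{L\times L}$; correspondingly $Q_{j-1}^{(j)}\cdots Q_1^{(j)}H_j=\begin{bmatrix}R_{j-1}&Z_j\\0&\hat H_{jj}\end{bmatrix}$; and $\Omega_j\begin{bmatrix}\hat H_{jj}\\H_{j+1,j}\end{bmatrix}=\begin{bmatrix}N_j\\0\end{bmatrix}$ with $N_j$ upper triangular and nonsingular, so $R_j=\begin{bmatrix}R_{j-1}&Z_j\\0&N_j\end{bmatrix}$. Write $\bar Q_{j-1}E^{[j]}S_0=\begin{bmatrix}G_{j-1}\\\tilde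 C_j\end{bmatrix}$ with $G_{j-1}\in\mathbb C^{(j-1)L\times L}$, $\tilde C_j\in\mathbb C^{L\times L}$, and set $C_j=Q_j^{(11)}\tilde C_j$. *)

theory Defs
  imports Complex_Main "Jordan_Normal_Form.Schur_Decomposition" "Jordan_Normal_Form.DL_Rank"
begin

definition mrank :: "complex mat \<Rightarrow> nat" where
  "mrank M = vec_space.rank (dim_row M) M"

definition blk :: "'a mat \<Rightarrow> nat \<Rightarrow> nat \<Rightarrow> nat \<Rightarrow> nat \<Rightarrow> 'a mat" where
  "blk M r0 c0 nr nc = mat nr nc (\<lambda>(i,k). M $$ (r0 + i, c0 + k))"

(* L x L block (i,k) (1-based block indices) of a block matrix *)
definition hblock :: "'a mat \<Rightarrow> nat \<Rightarrow> nat \<Rightarrow> nat \<Rightarrow> 'a mat" where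
  "hblock M L i k = blk M ((i - 1) * L) ((k - 1) * L) L L"

definition orthonormal_cols :: "complex mat \<Rightarrow> bool" where
  "orthonormal_cols W \<longleftrightarrow> mat_adjoint W * W = 1\<^sub>m (dim_col W)"

definition unitary_mat :: "complex mat \<Rightarrow> bool" where
  "unitary_mat U \<longleftrightarrow> square_mat U \<and> mat_adjoint U * U = 1\<^sub>m (dim_col U)
                       \<and> U * mat_adjoint U = 1\<^sub>m (dim_row U)"

definition fro_norm :: "complex mat \<Rightarrow> real" where
  "fro_norm M = sqrt (\<Sum>i<dim_row M. \<Sum>k<dim_col M. (cmod (M $$ (i,k)))\<^sup>2)"

definition Emat :: "nat \<Rightarrow> nat \<Rightarrow> complex mat" where
  "Emat L m = blk (1\<^sub>m (m * L)) 0 0 (m * L) L"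

(* Q_i^(m) = diag(I_{(i-1)L}, Omega_i, I_{(m-i-1)L})  (for 1 <= i, i+1 <= m) *)
definition Qembed :: "(nat \<Rightarrow> complex mat) \<Rightarrow> nat \<Rightarrow> nat \<Rightarrow> nat \<Rightarrow> complex mat" where
  "Qembed Om L i m = mat (m * L) (m * L) (\<lambda>(r,c).
     if (i - 1) * L \<le> r \<and> r < (i + 1) * L \<and> (i - 1) * L \<le> c \<and> c < (i + 1) * L
     then Om i $$ (r - (i - 1) * L, c - (i - 1) * L)
     else if r = c then 1 else 0)"

fun Qprod :: "(nat \<Rightarrow> complex mat) \<Rightarrow> nat \<Rightarrow> nat \<Rightarrow> nat \<Rightarrow> complex mat" where
  "Qprod Om L 0 m = 1\<^sub>m (m * L)"
| "Qprod Om L (Suc k) m = Qembed Om L (Suc k) m * Qprod Om L k m"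

end

theory Submission
  imports Defs
begin

text \<open>Let \<open>Q = Qbar_{j-1}\<close> (as a \<open>jL \<times> jL\<close> matrix) and \<open>p = (j - 1) L\<close>. Rotating \<open>H_j\<close> by the
  unitary \<open>Q\<close> gives \<open>[R_{j-1}, Z_j; 0, Hhat_jj]\<close> with \<open>R_{j-1}\<close> nonsingular, so
  \<open>rank H_j = p + rank Hhat_jj\<close>. The last rotation maps \<open>[Hhat_jj; H_{j+1,j}]\<close> to \<open>[N_j; 0]\<close>,
  and unitarity of \<open>\<Omega>_j\<close> turns this into \<open>Hhat_jj = (Q_j^(11))^H N_j\<close>, so
  \<open>rank Hhat_jj = rank Q_j^(11)\<close>. Finally, minimality of the least squares solution \<open>Y\<close> forces
  the rotated residual \<open>Q (Hbar_{j-1} Y - E S_0)\<close> to vanish except for its last block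
  \<open>-Ctilde_j\<close>; as the Arnoldi relation gives \<open>F_{j-1} = W_j (E S_0 - Hbar_{j-1} Y)\<close>, the
  hypothesis \<open>rank F_{j-1} = L\<close> makes \<open>Ctilde_j\<close> nonsingular, whence
  \<open>rank C_j = rank (Q_j^(11) Ctilde_j) = rank Q_j^(11)\<close>.

  Ranks are handled through injective column selections: \<open>rank A\<close> is the largest \<open>k\<close> such
  that \<open>A N\<close> is injective for some matrix \<open>N\<close> with \<open>k\<close> columns.\<close>

section \<open>Rank via injective column selections\<close>

definition inj_mat :: "'a::field mat \<Rightarrow> bool" where
  "inj_mat M \<longleftrightarrow> (\<forall>v\<in>carrier_vec (dim_col M). M *\<^sub>v v = 0\<^sub>v (dim_row M) \<longrightarrow> v = 0\<^sub>v (dim_col M))"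

lemma mult_mat_vec_zero_vec[simp]: "A \<in> carrier_mat nr nc \<Longrightarrow> A *\<^sub>v 0\<^sub>v nc = 0\<^sub>v nr"
  by (intro eq_vecI) (auto simp: scalar_prod_def)

lemma zero_mat_mult_vec[simp]: "v \<in> carrier_vec nc \<Longrightarrow> 0\<^sub>m nr nc *\<^sub>v v = 0\<^sub>v nr"
  by (intro eq_vecI) (auto simp: scalar_prod_def)

lemma det_nonzero_right_inverse:
  assumes "(A::'a::field mat) \<in> carrier_mat n n" and "det A \<noteq> 0"
  obtains B where "B \<in> carrier_mat n n" "A * B = 1\<^sub>m n"
  using det_non_zero_imp_unit[OF assms, of "()"] that unfolding Units_def ring_mat_def by auto

lemma mult_unit_vec_eq_col:
  assumes A: "(A::'a::comm_ring_1 mat) \<in> carrier_mat nr nc" and i: "i < nc"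
  shows "A *\<^sub>v unit_vec nc i = col A i"
proof (rule eq_vecI)
  fix r assume "r < dim_vec (col A i)"
  then have r: "r < nr" using A by auto
  have "(A *\<^sub>v unit_vec nc i) $ r = (\<Sum>k<nc. A $$ (r,k) * unit_vec nc i $ k)"
    using A r unfolding mult_mat_vec_def scalar_prod_def by (auto simp: atLeast0LessThan)
  also have "\<dots> = (\<Sum>k<nc. if k = i then A $$ (r,k) else 0)"
    by (rule sum.cong) (auto simp: unit_vec_def)
  finally show "(A *\<^sub>v unit_vec nc i) $ r = col A i $ r" using A r i by auto
qed (use A in auto)

context vec_space begin

lemma rank_le_of_cols_in_span:
  assumes A: "A \<in> carrier_mat n nc" and B: "B \<in> carrier_mat n nc'"
    and sub: "set (cols B) \<subseteq> span (set (cols A))"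
  shows "rank B \<le> rank A"
proof -
  define W where "W = span (set (cols A))"
  have sW: "VectorSpace.subspace class_ring W V"
    unfolding W_def using A cols_dim carrier_matD(1) span_is_subspace by (metis List.finite_set)
  have "span (set (cols B)) \<subseteq> W"
    unfolding W_def using sub A cols_dim by (metis carrier_matD(1) span_is_submodule span_is_subset)
  moreover have "VectorSpace.subspace class_ring (span (set (cols B))) V"
    using B cols_dim carrier_matD(1) span_is_subspace by (metis List.finite_set)
  ultimately have "VectorSpace.subspace class_ring (span (set (cols B))) (vs W)"
    using nested_subspaces[OF sW] by blast
  moreover have "vectorspace.fin_dim class_ring (vs W)" unfolding W_def using A fin_dim_span_cols by blast
  moreover have "vectorspace.fin_dim class_ring (span_vs (set (cols B)))" using B fin_dim_span_cols by blast
  ultimately have "rank B \<le> vectorspace.dim class_ring (vs W)"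
    unfolding rank_def using vectorspace.subspace_dim[OF subspace_is_vs[OF sW]] by auto
  then show ?thesis unfolding rank_def W_def by simp
qed

lemma rank_eq_dim_col_if_inj:
  assumes B: "B \<in> carrier_mat n k" and inj: "inj_mat B"
  shows "rank B = k"
proof -
  have distinct: "distinct (cols B)"
  proof (rule ccontr)
    assume "\<not> distinct (cols B)"
    then obtain i j where ij: "i \<noteq> j" "col B i = col B j" "i < k" "j < k"
      using B by (auto simp: distinct_conv_nth)
    define v where "v = (unit_vec k i - unit_vec k j :: 'a vec)"
    have v: "v \<in> carrier_vec k" and "v \<noteq> 0\<^sub>v k"
      unfolding v_def using ij by (auto simp: vec_eq_iff intro!: exI[of _ i])
    moreover have "B *\<^sub>v v = 0\<^sub>v n"
      unfolding v_def using B ij by (simp add: mult_minus_distrib_mat_vec mult_unit_vec_eq_col)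
    ultimately show False using inj B unfolding inj_mat_def by auto
  qed
  have "lin_indpt (set (cols B))"
  proof
    assume "lin_dep (set (cols B))"
    then obtain v where "v \<in> carrier_vec k" "v \<noteq> 0\<^sub>v k" "B *\<^sub>v v = 0\<^sub>v n"
      using lin_depE[OF B _ distinct] by blast
    then show False using inj B unfolding inj_mat_def by auto
  qed
  then show ?thesis using lin_indpt_full_rank[OF B distinct] by blast
qed

lemma rank_ge_if_inj_mult:
  assumes A: "A \<in> carrier_mat n nc" and N: "N \<in> carrier_mat nc k" and inj: "inj_mat (A * N)"
  shows "k \<le> rank A"
proof -
  have AN: "A * N \<in> carrier_mat n k" using A N by auto
  have "set (cols (A * N)) \<subseteq> span (set (cols A))"
  proof
    fix x assume "x \<in> set (cols (A * N))"
    then obtain i where "i < k" "x = col (A * N) i" using AN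
      by (metis cols_length cols_nth carrier_matD(2) in_set_conv_nth)
    then have "x = A *\<^sub>v col N i" using A N by auto
    then show "x \<in> span (set (cols A))"
      using col_space_eq[OF A] A N \<open>i < k\<close> unfolding col_space_def
      by (auto intro!: bexI[of _ "col N i"])
  qed
  then show ?thesis using rank_le_of_cols_in_span[OF A AN] rank_eq_dim_col_if_inj[OF AN inj] by auto
qed

text \<open>The witness selects a maximal independent set of columns of \<open>A\<close>.\<close>

lemma rank_inj_witness:
  assumes A: "A \<in> carrier_mat n nc"
  obtains N where "N \<in> carrier_mat nc (rank A)" "inj_mat (A * N)"
proof -
  obtain S where S: "maximal S (\<lambda>T. T \<subseteq> set (cols A) \<and> lin_indpt T)"
    using maximal_exists[of "(\<lambda>T. T \<subseteq> set (cols A) \<and> lin_indpt T)" "card (set (cols A))" "{}"]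
    by (meson List.finite_set card_mono empty_iff empty_subsetI finite_lin_indpt2 rev_finite_subset)
  have rk: "rank A = card S" using rank_card_indpt[OF A S] .
  have Ssub: "S \<subseteq> set (cols A)" and Sli: "lin_indpt S" using S unfolding maximal_def by auto
  obtain xs where xs: "set xs = S" "distinct xs"
    using finite_distinct_list Ssub finite_subset by (metis List.finite_set)
  have lxs: "length xs = rank A" using rk xs distinct_card by fastforce
  define idx where "idx x = (SOME i. i < nc \<and> x = col A i)" for x
  have idx: "idx x < nc \<and> x = col A (idx x)" if "x \<in> S" for x
  proof -
    from that Ssub have "\<exists>i. i < nc \<and> x = col A i" using A
      by (metis cols_length cols_nth carrier_matD(2) in_set_conv_nth subsetD)
    from someI_ex[OF this] show ?thesis unfolding idx_def .
  qed
  define N where "N = (mat nc (length xs) (\<lambda>(r,c). if r = idx (xs ! c) then 1 else 0) :: 'a mat)"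
  have N: "N \<in> carrier_mat nc (rank A)" unfolding N_def lxs[symmetric] by auto
  have AN: "A * N \<in> carrier_mat n (length xs)" using A N lxs by auto
  have "col (A * N) c = xs ! c" if c: "c < length xs" for c
  proof -
    have "xs ! c \<in> S" using c xs by auto
    then have i: "idx (xs ! c) < nc" and x: "xs ! c = col A (idx (xs ! c))" using idx by auto
    have "col N c = unit_vec nc (idx (xs ! c))"
      using c unfolding N_def by (intro eq_vecI, auto simp: unit_vec_def)
    then have "col (A * N) c = A *\<^sub>v unit_vec nc (idx (xs ! c))"
      using col_mult2[OF A N] c lxs by simp
    then show ?thesis using x mult_unit_vec_eq_col[OF A i] by simp
  qed
  then have colsAN: "cols (A * N) = xs" using AN by (intro nth_equalityI) auto
  have "inj_mat (A * N)"
    unfolding inj_mat_def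
  proof (intro ballI impI, rule ccontr)
    fix v assume v: "v \<in> carrier_vec (dim_col (A * N))" "A * N *\<^sub>v v = 0\<^sub>v (dim_row (A * N))"
      "v \<noteq> 0\<^sub>v (dim_col (A * N))"
    have "lin_dep (set (cols (A * N)))"
      using lin_depI[OF AN] v AN colsAN xs by auto
    then show False using Sli colsAN xs by simp
  qed
  with N show ?thesis by (rule that)
qed

end

lemma mrank_ge_if_inj_mult:
  assumes "A \<in> carrier_mat nr nc" and "N \<in> carrier_mat nc k" and "inj_mat (A * N)"
  shows "k \<le> mrank A"
  unfolding mrank_def using vec_space.rank_ge_if_inj_mult assms by auto

lemma mrank_inj_witness:
  assumes "A \<in> carrier_mat nr nc"
  obtains N where "N \<in> carrier_mat nc (mrank A)" "inj_mat (A * N)"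
  unfolding mrank_def using vec_space.rank_inj_witness[of A "dim_row A" nc] assms by auto

lemma mrank_le_dim_col: "A \<in> carrier_mat nr nc \<Longrightarrow> mrank A \<le> nc"
  unfolding mrank_def using vec_space.rank_le_nc by auto

lemma mrank_add_le:
  assumes "A \<in> carrier_mat nr nc" "B \<in> carrier_mat nr nc"
  shows "mrank (A + B) \<le> mrank A + mrank B"
  unfolding mrank_def using vec_space.rank_subadditive[OF assms] assms by simp

lemma mrank_mult_le_left:
  assumes A: "A \<in> carrier_mat nr m" and B: "B \<in> carrier_mat m nc"
  shows "mrank (A * B) \<le> mrank A"
proof -
  obtain N where N: "N \<in> carrier_mat nc (mrank (A * B))" "inj_mat (A * B * N)"
    using mrank_inj_witness[of "A * B" nr nc] A B by auto
  have "A * B * N = A * (B * N)" by (rule assoc_mult_mat[OF A B N(1)])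
  then show ?thesis using mrank_ge_if_inj_mult[OF A mult_carrier_mat[OF B N(1)]] N(2) by simp
qed

lemma mrank_mult_ge_right:
  assumes A: "A \<in> carrier_mat nr m" and B: "B \<in> carrier_mat m nc"
    and inj_on_range: "\<And>v. v \<in> carrier_vec nc \<Longrightarrow> A *\<^sub>v (B *\<^sub>v v) = 0\<^sub>v nr \<Longrightarrow> B *\<^sub>v v = 0\<^sub>v m"
  shows "mrank B \<le> mrank (A * B)"
proof -
  obtain N where N: "N \<in> carrier_mat nc (mrank B)" and inj: "inj_mat (B * N)"
    using mrank_inj_witness[OF B] by blast
  have AB: "A * B \<in> carrier_mat nr nc" using A B by (rule mult_carrier_mat)
  have BN: "B * N \<in> carrier_mat m (mrank B)" using B N by (rule mult_carrier_mat)
  have ABN: "A * B * N \<in> carrier_mat nr (mrank B)" using AB N by (rule mult_carrier_mat)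
  have "inj_mat (A * B * N)"
    unfolding inj_mat_def
  proof (intro ballI impI)
    fix v assume v: "v \<in> carrier_vec (dim_col (A * B * N))" "A * B * N *\<^sub>v v = 0\<^sub>v (dim_row (A * B * N))"
    have v': "v \<in> carrier_vec (mrank B)" using v(1) N by simp
    have Nv: "N *\<^sub>v v \<in> carrier_vec nc" using N v' by (rule mult_mat_vec_carrier)
    have "A *\<^sub>v (B *\<^sub>v (N *\<^sub>v v)) = A * B * N *\<^sub>v v"
      using assoc_mult_mat_vec[OF AB N v'] assoc_mult_mat_vec[OF A B Nv] by simp
    also have "\<dots> = 0\<^sub>v nr" using v(2) carrier_matD[OF A] by simp
    finally have "B *\<^sub>v (N *\<^sub>v v) = 0\<^sub>v m" by (rule inj_on_range[OF Nv])
    then have "B * N *\<^sub>v v = 0\<^sub>v (dim_row (B * N))"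
      using assoc_mult_mat_vec[OF B N v'] carrier_matD[OF B] by simp
    then show "v = 0\<^sub>v (dim_col (A * B * N))" using inj v' carrier_matD[OF N] unfolding inj_mat_def by simp
  qed
  then show ?thesis using mrank_ge_if_inj_mult[OF AB N] by blast
qed

lemma mrank_mult_le_right:
  assumes A: "A \<in> carrier_mat nr m" and B: "B \<in> carrier_mat m nc"
  shows "mrank (A * B) \<le> mrank B"
proof -
  have AB: "A * B \<in> carrier_mat nr nc" using A B by (rule mult_carrier_mat)
  obtain N where N: "N \<in> carrier_mat nc (mrank (A * B))" and inj: "inj_mat (A * B * N)"
    using mrank_inj_witness[OF AB] by blast
  have BN: "B * N \<in> carrier_mat m (mrank (A * B))" using B N by (rule mult_carrier_mat)
  have ABN: "A * B * N \<in> carrier_mat nr (mrank (A * B))" using AB N by (rule mult_carrier_mat)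
  have "inj_mat (B * N)"
    unfolding inj_mat_def
  proof (intro ballI impI)
    fix v assume v: "v \<in> carrier_vec (dim_col (B * N))" "B * N *\<^sub>v v = 0\<^sub>v (dim_row (B * N))"
    have v': "v \<in> carrier_vec (mrank (A * B))" using v(1) N by simp
    have "A * B * N *\<^sub>v v = A *\<^sub>v (B * N *\<^sub>v v)"
      using assoc_mult_mat[OF A B N] assoc_mult_mat_vec[OF A BN v'] by simp
    also have "\<dots> = 0\<^sub>v nr" using v(2) A carrier_matD[OF B] by simp
    finally show "v = 0\<^sub>v (dim_col (B * N))" using inj v' carrier_matD[OF A] carrier_matD[OF B] carrier_matD[OF N] unfolding inj_mat_def by simp
  qed
  then show ?thesis using mrank_ge_if_inj_mult[OF B N] by blast
qed

lemma mrank_mult_left_inverse: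
  assumes A: "A \<in> carrier_mat nr m" and X: "X \<in> carrier_mat m nc" and P: "P \<in> carrier_mat m nr"
    and PA: "P * A = 1\<^sub>m m"
  shows "mrank (A * X) = mrank X"
proof -
  have AX: "A * X \<in> carrier_mat nr nc" using A X by (rule mult_carrier_mat)
  have "P * (A * X) = X" using assoc_mult_mat[OF P A X] PA X by simp
  then have "mrank X \<le> mrank (A * X)" using mrank_mult_le_right[OF P AX] by simp
  then show ?thesis using mrank_mult_le_right[OF A X] by simp
qed

lemma mrank_mult_right_inverse:
  assumes X: "X \<in> carrier_mat nr nc" and N: "N \<in> carrier_mat nc nc" and N': "N' \<in> carrier_mat nc nc"
    and NN': "N * N' = 1\<^sub>m nc"
  shows "mrank (X * N) = mrank X"
proof -
  have XN: "X * N \<in> carrier_mat nr nc" using X N by (rule mult_carrier_mat)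
  have "X * N * N' = X" using assoc_mult_mat[OF X N N'] NN' X by simp
  then have "mrank X \<le> mrank (X * N)" using mrank_mult_le_left[OF XN N'] by simp
  then show ?thesis using mrank_mult_le_left[OF X N] by simp
qed

lemma mrank_mult_det_nonzero_right:
  assumes X: "X \<in> carrier_mat nr nc" and N: "N \<in> carrier_mat nc nc" and "det N \<noteq> 0"
  shows "mrank (X * N) = mrank X"
proof -
  obtain N' where "N' \<in> carrier_mat nc nc" "N * N' = 1\<^sub>m nc"
    using det_nonzero_right_inverse[OF N \<open>det N \<noteq> 0\<close>] by blast
  then show ?thesis using mrank_mult_right_inverse[OF X N] by blast
qed

lemma mrank_uminus:
  assumes "X \<in> carrier_mat nr nc"
  shows "mrank (- X) = mrank X"
proof -
  have inv: "(- 1\<^sub>m nc) * (- 1\<^sub>m nc) = (1\<^sub>m nc :: complex mat)" by (intro eq_matI) auto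
  have "mrank (X * (- 1\<^sub>m nc)) = mrank X" by (rule mrank_mult_right_inverse[OF assms _ _ inv]) auto
  moreover have "- X = X * (- 1\<^sub>m nc)" using assms by (intro eq_matI) auto
  ultimately show ?thesis by simp
qed

lemma inj_mat_if_mrank_eq_dim_col:
  assumes A: "A \<in> carrier_mat nr nc" and r: "mrank A = nc"
  shows "inj_mat A"
proof -
  obtain N where N: "N \<in> carrier_mat nc nc" and inj: "inj_mat (A * N)"
    using mrank_inj_witness[OF A] r by auto
  have "det N \<noteq> 0"
  proof
    assume "det N = 0"
    then obtain v where v: "v \<in> carrier_vec nc" "v \<noteq> 0\<^sub>v nc" "N *\<^sub>v v = 0\<^sub>v nc"
      using det_0_iff_vec_prod_zero_field[OF N] by blast
    then have "A * N *\<^sub>v v = 0\<^sub>v nr" using A N by simp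
    then show False using inj v A N unfolding inj_mat_def by auto
  qed
  then obtain N' where N': "N' \<in> carrier_mat nc nc" "N * N' = 1\<^sub>m nc"
    using det_nonzero_right_inverse[OF N] by blast
  show ?thesis unfolding inj_mat_def
  proof (intro ballI impI)
    fix v assume v: "v \<in> carrier_vec (dim_col A)" "A *\<^sub>v v = 0\<^sub>v (dim_row A)"
    have v': "v \<in> carrier_vec nc" using v A by simp
    have NN'v: "N *\<^sub>v (N' *\<^sub>v v) = v"
      using assoc_mult_mat_vec[OF N N'(1) v', symmetric] N'(2) v' by simp
    then have "A * N *\<^sub>v (N' *\<^sub>v v) = 0\<^sub>v nr" using v A N N' v' by simp
    then have "N' *\<^sub>v v = 0\<^sub>v nc" using inj N' A N v' unfolding inj_mat_def by simp
    then show "v = 0\<^sub>v (dim_col A)" using NN'v N A by simp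
  qed
qed

lemma det_nonzero_if_mrank_eq_dim_col:
  assumes A: "A \<in> carrier_mat n n" and "mrank A = n"
  shows "det A \<noteq> 0"
  using inj_mat_if_mrank_eq_dim_col[OF assms] det_0_iff_vec_prod_zero_field[OF A] A
  unfolding inj_mat_def by auto

section \<open>Adjoints\<close>

lemma mat_adjoint_carrier[simp]: "mat_adjoint (A::complex mat) \<in> carrier_mat (dim_col A) (dim_row A)"
  unfolding mat_adjoint_def by auto

lemma mat_adjoint_carrier_mat:
  "(A::complex mat) \<in> carrier_mat nr nc \<Longrightarrow> mat_adjoint A \<in> carrier_mat nc nr"
  unfolding mat_adjoint_def by auto

lemma mat_adjoint_dims[simp]:
  "dim_row (mat_adjoint (A::complex mat)) = dim_col A"
  "dim_col (mat_adjoint (A::complex mat)) = dim_row A"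
  unfolding mat_adjoint_def by auto

lemma mat_adjoint_index[simp]:
  "i < dim_col A \<Longrightarrow> k < dim_row A \<Longrightarrow> mat_adjoint (A::complex mat) $$ (i,k) = cnj (A $$ (k,i))"
  unfolding mat_adjoint_def by (simp add: mat_of_rows_index)

lemma mat_adjoint_adjoint[simp]: "mat_adjoint (mat_adjoint (A::complex mat)) = A"
  by (rule eq_matI) auto

lemma mat_adjoint_one[simp]: "mat_adjoint (1\<^sub>m n :: complex mat) = 1\<^sub>m n"
  by (rule eq_matI) auto

lemma mat_adjoint_mult:
  assumes A: "(A::complex mat) \<in> carrier_mat nr n" and B: "B \<in> carrier_mat n nc"
  shows "mat_adjoint (A * B) = mat_adjoint B * mat_adjoint A"
proof (rule eq_matI)
  fix i k assume "i < dim_row (mat_adjoint B * mat_adjoint A)" "k < dim_col (mat_adjoint B * mat_adjoint A)"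
  then have i: "i < nc" and k: "k < nr" using A B by auto
  have "mat_adjoint (A * B) $$ (i,k) = cnj (\<Sum>s<n. A $$ (k,s) * B $$ (s,i))"
    using A B i k by (simp add: scalar_prod_def atLeast0LessThan)
  also have "\<dots> = (\<Sum>s<n. cnj (B $$ (s,i)) * cnj (A $$ (k,s)))"
    by (simp add: cnj_sum mult.commute)
  also have "\<dots> = (mat_adjoint B * mat_adjoint A) $$ (i,k)"
    using A B i k by (simp add: scalar_prod_def atLeast0LessThan)
  finally show "mat_adjoint (A * B) $$ (i,k) = (mat_adjoint B * mat_adjoint A) $$ (i,k)" .
qed (use A B in auto)

lemma mat_adjoint_mult_isometry:
  assumes P: "(P::complex mat) \<in> carrier_mat n n" and Q: "Q \<in> carrier_mat n n"
    and "mat_adjoint P * P = 1\<^sub>m n" "mat_adjoint Q * Q = 1\<^sub>m n"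
  shows "mat_adjoint (P * Q) * (P * Q) = 1\<^sub>m n"
proof -
  have PH: "mat_adjoint P \<in> carrier_mat n n" and QH: "mat_adjoint Q \<in> carrier_mat n n"
    using P Q by auto
  have "mat_adjoint (P * Q) * (P * Q) = mat_adjoint Q * (mat_adjoint P * (P * Q))"
    unfolding mat_adjoint_mult[OF P Q] using P Q by (intro assoc_mult_mat[OF QH PH]) auto
  also have "\<dots> = mat_adjoint Q * Q"
    using assoc_mult_mat[OF PH P Q] assms(3) Q by simp
  finally show ?thesis using assms(4) by simp
qed

text \<open>\<open>v\<^sup>H A\<^sup>H A v = \<parallel>A v\<parallel>\<^sup>2\<close>.\<close>

lemma mat_adjoint_mult_self_kernel:
  assumes A: "(A::complex mat) \<in> carrier_mat nr nc" and v: "v \<in> carrier_vec nc"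
    and z: "mat_adjoint A *\<^sub>v (A *\<^sub>v v) = 0\<^sub>v nc"
  shows "A *\<^sub>v v = 0\<^sub>v nr"
proof -
  define w where "w = A *\<^sub>v v"
  have w: "w \<in> carrier_vec nr" unfolding w_def using A v by simp
  have adj_w: "(\<Sum>k<nr. cnj (A $$ (k,i)) * w $ k) = 0" if "i < nc" for i
  proof -
    have "(mat_adjoint A *\<^sub>v w) $ i = 0" using z that unfolding w_def by auto
    then show ?thesis using A that w by (auto simp: scalar_prod_def atLeast0LessThan)
  qed
  have "w \<bullet>c w = (\<Sum>k<nr. \<Sum>i<nc. A $$ (k,i) * v $ i * cnj (w $ k))"
    using w A v unfolding w_def
    by (auto simp: scalar_prod_def atLeast0LessThan sum_distrib_right intro!: sum.cong)
  also have "\<dots> = (\<Sum>i<nc. v $ i * cnj (\<Sum>k<nr. cnj (A $$ (k,i)) * w $ k))"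
    by (subst sum.swap) (simp add: cnj_sum sum_distrib_left mult.assoc mult.left_commute)
  also have "\<dots> = 0" using adj_w by simp
  finally have "w \<bullet>c w = 0" .
  then show ?thesis using conjugate_square_eq_0_vec[OF w] unfolding w_def by simp
qed

lemma mrank_adjoint: "mrank (mat_adjoint (X::complex mat)) = mrank X"
proof -
  have le: "mrank Y \<le> mrank (mat_adjoint Y)" for Y :: "complex mat"
  proof -
    have Y: "Y \<in> carrier_mat (dim_row Y) (dim_col Y)" by simp
    have "mrank Y \<le> mrank (mat_adjoint Y * Y)"
      by (rule mrank_mult_ge_right[OF mat_adjoint_carrier Y mat_adjoint_mult_self_kernel[OF Y]])
    also have "\<dots> \<le> mrank (mat_adjoint Y)" by (rule mrank_mult_le_left[OF mat_adjoint_carrier Y])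
    finally show ?thesis .
  qed
  show ?thesis using le[of X] le[of "mat_adjoint X"] by simp
qed

section \<open>Block calculus\<close>

lemma blk_index[simp]: "i < nr \<Longrightarrow> k < nc \<Longrightarrow> blk M r0 c0 nr nc $$ (i,k) = M $$ (r0 + i, c0 + k)"
  unfolding blk_def by simp

lemma blk_dims[simp]: "dim_row (blk M r0 c0 nr nc) = nr" "dim_col (blk M r0 c0 nr nc) = nc"
  unfolding blk_def by simp_all

lemma blk_carrier[simp]: "blk M r0 c0 nr nc \<in> carrier_mat nr nc"
  unfolding blk_def by simp

lemma blk_whole: "A \<in> carrier_mat nr nc \<Longrightarrow> blk A 0 0 nr nc = A"
  by (rule eq_matI) auto

lemma blk_zero[simp]:
  "r0 + nr \<le> a \<Longrightarrow> c0 + nc \<le> b \<Longrightarrow> blk (0\<^sub>m a b) r0 c0 nr nc = 0\<^sub>m nr nc"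
  by (rule eq_matI) auto

lemma blk_blk:
  assumes "r1 + nr \<le> a" "c1 + nc \<le> b"
  shows "blk (blk M r0 c0 a b) r1 c1 nr nc = blk M (r0 + r1) (c0 + c1) nr nc"
  using assms by (intro eq_matI) (auto simp: add.assoc)

lemma blk_mult:
  assumes A: "A \<in> carrier_mat ar k" and B: "B \<in> carrier_mat k bc"
    and "r0 + nr \<le> ar" "c0 + nc \<le> bc"
  shows "blk (A * B) r0 c0 nr nc = blk A r0 0 nr k * blk B 0 c0 k nc"
  using assms by (intro eq_matI) (auto simp: scalar_prod_def)

lemma blk_minus:
  assumes "A \<in> carrier_mat nr' nc'" "B \<in> carrier_mat nr' nc'" "r0 + nr \<le> nr'" "c0 + nc \<le> nc'"
  shows "blk (A - B) r0 c0 nr nc = blk A r0 c0 nr nc - blk B r0 c0 nr nc"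
  using assms by (intro eq_matI) auto

lemma blk_mat_adjoint:
  assumes "r0 + nr \<le> dim_col M" "c0 + nc \<le> dim_row M"
  shows "blk (mat_adjoint (M::complex mat)) r0 c0 nr nc = mat_adjoint (blk M c0 r0 nc nr)"
  using assms by (intro eq_matI) auto

lemma sum_lessThan_add_split:
  "(\<Sum>s<p + l. f s) = (\<Sum>s<p. f s) + (\<Sum>s<l. f (p + s :: nat))"
  by (induct l) (simp_all add: add.assoc)

lemma mult_eq_blk_split:
  assumes A: "A \<in> carrier_mat nr (p + l)" and B: "B \<in> carrier_mat (p + l) nc"
  shows "A * B = blk A 0 0 nr p * blk B 0 0 p nc + blk A 0 p nr l * blk B p 0 l nc"
proof (rule eq_matI)
  fix i k assume "i < dim_row (blk A 0 0 nr p * blk B 0 0 p nc + blk A 0 p nr l * blk B p 0 l nc)"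
    "k < dim_col (blk A 0 0 nr p * blk B 0 0 p nc + blk A 0 p nr l * blk B p 0 l nc)"
  then have i: "i < nr" and k: "k < nc" by auto
  have "(A * B) $$ (i,k) = (\<Sum>s<p + l. A $$ (i,s) * B $$ (s,k))"
    using A B i k by (simp add: scalar_prod_def atLeast0LessThan)
  also have "\<dots> = (\<Sum>s<p. A $$ (i,s) * B $$ (s,k)) + (\<Sum>s<l. A $$ (i,p + s) * B $$ (p + s,k))"
    by (rule sum_lessThan_add_split)
  finally show "(A * B) $$ (i,k) = (blk A 0 0 nr p * blk B 0 0 p nc + blk A 0 p nr l * blk B p 0 l nc) $$ (i,k)"
    using i k by (simp add: scalar_prod_def atLeast0LessThan)
qed (use A B in auto)

lemma mult_eq_blk_if_tail_rows_zero:
  assumes A: "A \<in> carrier_mat nr (p + l)" and B: "B \<in> carrier_mat (p + l) nc"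
    and tail: "blk B p 0 l nc = 0\<^sub>m l nc"
  shows "A * B = blk A 0 0 nr p * blk B 0 0 p nc"
  using mult_eq_blk_split[OF A B] unfolding tail
  by (simp add: right_add_zero_mat[OF mult_carrier_mat[OF blk_carrier blk_carrier]])

lemma mult_eq_blk_if_lead_cols_zero:
  assumes A: "A \<in> carrier_mat nr (p + l)" and B: "B \<in> carrier_mat (p + l) nc"
    and lead: "blk A 0 0 nr p = 0\<^sub>m nr p"
  shows "A * B = blk A 0 p nr l * blk B p 0 l nc"
  using mult_eq_blk_split[OF A B] unfolding lead
  by (simp add: left_add_zero_mat[OF mult_carrier_mat[OF blk_carrier blk_carrier]])

lemma four_block_mat_blk:
  assumes "T \<in> carrier_mat (p + l) (q + k)"
  shows "T = four_block_mat (blk T 0 0 p q) (blk T 0 q p k) (blk T p 0 l q) (blk T p q l k)"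
  using assms by (intro eq_matI) (auto simp: not_less)

lemma mrank_block_upper_triangular_le:
  assumes T: "T \<in> carrier_mat (p + l) (p + l)" and lower: "blk T p 0 l p = 0\<^sub>m l p"
  shows "mrank T \<le> p + mrank (blk T p p l l)"
proof -
  let ?I = "1\<^sub>m (p + l) :: complex mat"
  define H where "H = blk T p p l l"
  define Bot where "Bot = blk T p 0 l (p + l)"
  define X where "X = blk ?I 0 0 (p + l) p * blk T 0 0 p (p + l)"
  define Y where "Y = blk ?I 0 p (p + l) l * (H * blk ?I p 0 l (p + l))"
  have "Bot = Bot * ?I" unfolding Bot_def by simp
  also have "\<dots> = blk Bot 0 p l l * blk ?I p 0 l (p + l)"
    by (rule mult_eq_blk_if_lead_cols_zero) (use lower in \<open>auto simp: Bot_def blk_blk\<close>)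
  also have "blk Bot 0 p l l = H" by (simp add: Bot_def H_def blk_blk)
  finally have "T = X + Y"
    using mult_eq_blk_split[OF one_carrier_mat T] T by (simp add: X_def Y_def Bot_def)
  moreover have "X \<in> carrier_mat (p + l) (p + l)" "Y \<in> carrier_mat (p + l) (p + l)"
    unfolding X_def Y_def H_def by (auto intro!: mult_carrier_mat)
  ultimately have "mrank T \<le> mrank X + mrank Y" using mrank_add_le by simp
  also have "mrank X \<le> p"
    using mrank_mult_le_left[OF blk_carrier blk_carrier] mrank_le_dim_col[OF blk_carrier]
    unfolding X_def by (rule order.trans)
  also have "mrank Y \<le> mrank H"
    using mrank_mult_le_right[OF blk_carrier mult_carrier_mat[OF blk_carrier blk_carrier]]
      mrank_mult_le_left[OF blk_carrier blk_carrier]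
    unfolding Y_def H_def by (rule order.trans)
  finally show ?thesis unfolding H_def by simp
qed

lemma inj_mat_four_block_diag:
  fixes R :: "'a::field mat"
  assumes R: "R \<in> carrier_mat p p" and det_R: "det R \<noteq> 0"
    and D: "D \<in> carrier_mat l r" and inj_D: "inj_mat D"
  shows "inj_mat (four_block_mat R (0\<^sub>m p r) (0\<^sub>m l p) D)"
  unfolding inj_mat_def
proof (intro ballI impI)
  let ?T = "four_block_mat R (0\<^sub>m p r) (0\<^sub>m l p) D"
  have T: "?T \<in> carrier_mat (p + l) (p + r)" using R D by simp
  fix v assume v: "v \<in> carrier_vec (dim_col ?T)" "?T *\<^sub>v v = 0\<^sub>v (dim_row ?T)"
  define a where "a = vec_first v p"
  define b where "b = vec_last v r"
  have a: "a \<in> carrier_vec p" and b: "b \<in> carrier_vec r" unfolding a_def b_def by auto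
  have vab: "v = a @\<^sub>v b" unfolding a_def b_def using v(1) R D by (simp add: vec_first_last_append)
  have "(R *\<^sub>v a) @\<^sub>v (D *\<^sub>v b) = ?T *\<^sub>v v"
    unfolding vab using four_block_mat_mult_vec[OF R zero_carrier_mat zero_carrier_mat D a b] R D a b
    by simp
  also have "\<dots> = 0\<^sub>v p @\<^sub>v 0\<^sub>v l" using v(2) T by (auto simp: vec_eq_iff)
  finally have "R *\<^sub>v a = 0\<^sub>v p" "D *\<^sub>v b = 0\<^sub>v l"
    using append_vec_eq[of "R *\<^sub>v a" p "0\<^sub>v p"] R a by auto
  then have "a = 0\<^sub>v p" "b = 0\<^sub>v r"
    using det_0_iff_vec_prod_zero_field[OF R] det_R a inj_D b D unfolding inj_mat_def by auto
  moreover have "0\<^sub>v p @\<^sub>v 0\<^sub>v r = (0\<^sub>v (p + r) :: 'a vec)" by (intro eq_vecI) auto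
  ultimately show "v = 0\<^sub>v (dim_col ?T)" using vab R D by simp
qed

lemma mrank_block_upper_triangular_ge:
  assumes T: "T \<in> carrier_mat (p + l) (p + l)" and lower: "blk T p 0 l p = 0\<^sub>m l p"
    and det_R: "det (blk T 0 0 p p) \<noteq> 0"
  shows "p + mrank (blk T p p l l) \<le> mrank T"
proof -
  define R where "R = blk T 0 0 p p"
  define Z where "Z = blk T 0 p p l"
  define H where "H = blk T p p l l"
  define r where "r = mrank H"
  have R: "R \<in> carrier_mat p p" and Z: "Z \<in> carrier_mat p l" and H: "H \<in> carrier_mat l l"
    unfolding R_def Z_def H_def by auto
  obtain N0 where N0: "N0 \<in> carrier_mat l r" and inj_HN0: "inj_mat (H * N0)"
    using mrank_inj_witness[OF H] unfolding r_def by blast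
  obtain R' where R': "R' \<in> carrier_mat p p" "R * R' = 1\<^sub>m p"
    using det_nonzero_right_inverse[OF R] det_R unfolding R_def by blast
  have ZN0: "Z * N0 \<in> carrier_mat p r" and HN0: "H * N0 \<in> carrier_mat l r" using Z H N0 by auto
  text \<open>Clear the block \<open>Z\<close> by a column operation and restrict \<open>H\<close> to independent columns.\<close>
  define X where "X = - (R' * (Z * N0))"
  have X: "X \<in> carrier_mat p r" unfolding X_def using R'(1) ZN0 by simp
  define N where "N = four_block_mat (1\<^sub>m p) X (0\<^sub>m l p) N0"
  have N: "N \<in> carrier_mat (p + l) (p + r)" unfolding N_def using X N0 by simp
  have "R * X = - (R * R' * (Z * N0))"
    unfolding X_def assoc_mult_mat[OF R R'(1) ZN0] using R R'(1) ZN0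
    by (intro uminus_mult_right_mat) auto
  then have RX: "R * X + Z * N0 = 0\<^sub>m p r"
    using R'(2) ZN0 by (simp add: left_mult_one_mat[OF ZN0] uminus_l_inv_mat)
  have T_blocks: "T = four_block_mat R Z (0\<^sub>m l p) H"
    unfolding R_def Z_def H_def lower[symmetric] by (rule four_block_mat_blk[OF T])
  have TN: "T * N = four_block_mat R (0\<^sub>m p r) (0\<^sub>m l p) (H * N0)"
  proof -
    have "T * N = four_block_mat (R * 1\<^sub>m p + Z * 0\<^sub>m l p) (R * X + Z * N0)
        (0\<^sub>m l p * 1\<^sub>m p + H * 0\<^sub>m l p) (0\<^sub>m l p * X + H * N0)"
      unfolding N_def T_blocks
      by (rule mult_four_block_mat[OF R Z zero_carrier_mat H one_carrier_mat X zero_carrier_mat N0])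
    then show ?thesis using R Z H X HN0 unfolding RX by simp
  qed
  have "inj_mat (T * N)"
    unfolding TN using inj_mat_four_block_diag[OF R det_R[folded R_def] HN0 inj_HN0] .
  then have "p + r \<le> mrank T" by (rule mrank_ge_if_inj_mult[OF T N])
  then show ?thesis unfolding r_def H_def .
qed

lemma mrank_block_upper_triangular:
  assumes "T \<in> carrier_mat (p + l) (p + l)" and "blk T p 0 l p = 0\<^sub>m l p"
    and "det (blk T 0 0 p p) \<noteq> 0"
  shows "mrank T = p + mrank (blk T p p l l)"
  using mrank_block_upper_triangular_le mrank_block_upper_triangular_ge assms by (metis le_antisym)

section \<open>Embedded rotations\<close>

definition embed_mat :: "nat \<Rightarrow> nat \<Rightarrow> nat \<Rightarrow> 'a::{zero,one} mat \<Rightarrow> 'a mat" where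
  "embed_mat N s d A = mat N N (\<lambda>(r,c).
     if s \<le> r \<and> r < s + d \<and> s \<le> c \<and> c < s + d then A $$ (r - s, c - s)
     else if r = c then 1 else 0)"

lemma embed_mat_carrier[simp]: "embed_mat N s d A \<in> carrier_mat N N"
  unfolding embed_mat_def by simp

lemma embed_mat_dims[simp]: "dim_row (embed_mat N s d A) = N" "dim_col (embed_mat N s d A) = N"
  unfolding embed_mat_def by simp_all

lemma embed_mat_index:
  "r < N \<Longrightarrow> c < N \<Longrightarrow> embed_mat N s d A $$ (r,c) =
     (if s \<le> r \<and> r < s + d \<and> s \<le> c \<and> c < s + d then A $$ (r - s, c - s)
      else if r = c then 1 else 0)"
  unfolding embed_mat_def by simp

lemma Qembed_carrier[simp]: "Qembed Om L i m \<in> carrier_mat (m * L) (m * L)"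
  unfolding Qembed_def by simp

lemma Qembed_eq_embed_mat:
  assumes "1 \<le> i"
  shows "Qembed Om L i m = embed_mat (m * L) ((i - 1) * L) (2 * L) (Om i)"
proof -
  have "(i + 1) * L = (i - 1) * L + 2 * L" using assms by (cases i) (auto simp: algebra_simps)
  then show ?thesis by (simp only: Qembed_def embed_mat_def)
qed

lemma embed_mat_mult_index_inside:
  fixes A :: "'a::comm_ring_1 mat"
  assumes X: "X \<in> carrier_mat N nc" and sdN: "s + d \<le> N"
    and r: "s \<le> r" "r < s + d" and c: "c < nc"
  shows "(embed_mat N s d A * X) $$ (r,c) = (\<Sum>t<d. A $$ (r - s, t) * X $$ (s + t, c))"
proof -
  define f where "f t = embed_mat N s d A $$ (r,t) * X $$ (t,c)" for t
  have "(embed_mat N s d A * X) $$ (r,c) = (\<Sum>t<N. f t)"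
    using X r sdN c unfolding f_def by (simp add: scalar_prod_def atLeast0LessThan)
  also have "\<dots> = (\<Sum>t\<in>{s..<s + d}. f t)"
    using sdN r by (intro sum.mono_neutral_right) (auto simp: f_def embed_mat_index)
  also have "\<dots> = (\<Sum>t\<in>{0 + s..<d + s}. f t)" by (simp add: add.commute)
  also have "\<dots> = (\<Sum>t<d. f (t + s))" unfolding sum.shift_bounds_nat_ivl atLeast0LessThan ..
  also have "\<dots> = (\<Sum>t<d. A $$ (r - s, t) * X $$ (s + t, c))"
    using sdN r by (intro sum.cong) (auto simp: f_def embed_mat_index add.commute)
  finally show ?thesis .
qed

lemma embed_mat_mult_index_outside:
  fixes A :: "'a::comm_ring_1 mat"
  assumes X: "X \<in> carrier_mat N nc" and r: "r < N" "\<not> (s \<le> r \<and> r < s + d)" and c: "c < nc"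
  shows "(embed_mat N s d A * X) $$ (r,c) = X $$ (r,c)"
proof -
  have "(embed_mat N s d A * X) $$ (r,c) = (\<Sum>t<N. embed_mat N s d A $$ (r,t) * X $$ (t,c))"
    using X r c by (simp add: scalar_prod_def atLeast0LessThan)
  also have "\<dots> = (\<Sum>t<N. if t = r then X $$ (t,c) else 0)"
    by (rule sum.cong[OF refl]) (use r in \<open>auto simp: embed_mat_index\<close>)
  also have "\<dots> = X $$ (r,c)" using r by simp
  finally show ?thesis .
qed

lemma blk_embed_mat_mult:
  fixes A :: "'a::comm_ring_1 mat"
  assumes A: "A \<in> carrier_mat d d" and X: "X \<in> carrier_mat N nc'"
    and "s + d \<le> N" "c0 + nc \<le> nc'"
  shows "blk (embed_mat N s d A * X) s c0 d nc = A * blk X s c0 d nc"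
proof (rule eq_matI)
  fix i k assume "i < dim_row (A * blk X s c0 d nc)" "k < dim_col (A * blk X s c0 d nc)"
  then have i: "i < d" and k: "k < nc" using A by auto
  have "blk (embed_mat N s d A * X) s c0 d nc $$ (i,k) = (embed_mat N s d A * X) $$ (s + i, c0 + k)"
    by (rule blk_index[OF i k])
  also have "\<dots> = (\<Sum>t<d. A $$ (i, t) * X $$ (s + t, c0 + k))"
    using embed_mat_mult_index_inside[OF X, of s d "s + i" "c0 + k"] assms i k by simp
  also have "\<dots> = (A * blk X s c0 d nc) $$ (i,k)"
    using A i k by (simp add: scalar_prod_def atLeast0LessThan)
  finally show "blk (embed_mat N s d A * X) s c0 d nc $$ (i,k) = (A * blk X s c0 d nc) $$ (i,k)" .
qed (use A in auto)

lemma embed_mat_mult: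
  fixes A B :: "'a::comm_ring_1 mat"
  assumes A: "A \<in> carrier_mat d d" and B: "B \<in> carrier_mat d d" and sdN: "s + d \<le> N"
  shows "embed_mat N s d A * embed_mat N s d B = embed_mat N s d (A * B)"
proof (rule eq_matI)
  fix r c assume "r < dim_row (embed_mat N s d (A * B))" "c < dim_col (embed_mat N s d (A * B))"
  then have r: "r < N" and c: "c < N" by auto
  show "(embed_mat N s d A * embed_mat N s d B) $$ (r,c) = embed_mat N s d (A * B) $$ (r,c)"
  proof (cases "s \<le> r \<and> r < s + d")
    case True
    then have "(embed_mat N s d A * embed_mat N s d B) $$ (r,c)
        = (\<Sum>t<d. A $$ (r - s, t) * embed_mat N s d B $$ (s + t, c))"
      using sdN c by (intro embed_mat_mult_index_inside) auto
    also have "\<dots> = (if s \<le> c \<and> c < s + d then \<Sum>t<d. A $$ (r - s, t) * B $$ (t, c - s) else 0)"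
      using sdN c by (auto simp: embed_mat_index intro!: sum.neutral sum.cong)
    also have "\<dots> = embed_mat N s d (A * B) $$ (r,c)"
      using True A B r c by (auto simp: embed_mat_index scalar_prod_def atLeast0LessThan)
    finally show ?thesis .
  next
    case False
    have "(embed_mat N s d A * embed_mat N s d B) $$ (r,c) = embed_mat N s d B $$ (r,c)"
      by (rule embed_mat_mult_index_outside[OF embed_mat_carrier r False c])
    then show ?thesis using False r c by (auto simp: embed_mat_index)
  qed
qed auto

lemma embed_mat_one: "embed_mat N s d (1\<^sub>m d) = (1\<^sub>m N :: 'a::{zero,one} mat)"
  by (rule eq_matI) (auto simp: embed_mat_index)

lemma embed_mat_adjoint:
  assumes "A \<in> carrier_mat d d"
  shows "mat_adjoint (embed_mat N s d (A::complex mat)) = embed_mat N s d (mat_adjoint A)"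
  using assms by (intro eq_matI) (auto simp: embed_mat_index)

lemma embed_mat_embed_mat:
  assumes "s + d \<le> n"
  shows "embed_mat N 0 n (embed_mat n s d A) = embed_mat N s d A"
  using assms by (intro eq_matI) (auto simp: embed_mat_index)

lemma embed_mat_isometry:
  assumes A: "A \<in> carrier_mat d d" and AA: "mat_adjoint A * A = 1\<^sub>m d" and "s + d \<le> N"
  shows "mat_adjoint (embed_mat N s d (A::complex mat)) * embed_mat N s d A = 1\<^sub>m N"
proof -
  have "mat_adjoint (embed_mat N s d A) * embed_mat N s d A = embed_mat N s d (mat_adjoint A * A)"
    unfolding embed_mat_adjoint[OF A] using A assms(3) by (intro embed_mat_mult) auto
  then show ?thesis unfolding AA embed_mat_one .
qed

lemma Qprod_carrier[simp]: "Qprod Om L k m \<in> carrier_mat (m * L) (m * L)"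
  by (induct k) (simp_all add: mult_carrier_mat[OF Qembed_carrier])

lemma Qprod_dims[simp]: "dim_row (Qprod Om L k m) = m * L" "dim_col (Qprod Om L k m) = m * L"
  using carrier_matD[OF Qprod_carrier] by auto

lemma Qprod_isometry:
  assumes "k + 1 \<le> m"
    and Om: "\<And>i. 1 \<le> i \<Longrightarrow> i \<le> k \<Longrightarrow> Om i \<in> carrier_mat (2 * L) (2 * L) \<and> mat_adjoint (Om i) * Om i = 1\<^sub>m (2 * L)"
  shows "mat_adjoint (Qprod Om L k m) * Qprod Om L k m = 1\<^sub>m (m * L)"
  using assms
proof (induct k)
  case (Suc k)
  have "k * L + 2 * L \<le> m * L"
    using Suc(2) mult_le_mono1[of "Suc k + 1" m L] by (simp add: algebra_simps)
  then have "mat_adjoint (Qembed Om L (Suc k) m) * Qembed Om L (Suc k) m = 1\<^sub>m (m * L)"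
    unfolding Qembed_eq_embed_mat[of "Suc k", simplified] using Suc(3)[of "Suc k"]
    by (intro embed_mat_isometry) auto
  then show ?case using Suc by (simp add: mat_adjoint_mult_isometry)
qed simp

lemma Qprod_eq_embed_mat:
  assumes "k + 1 \<le> m" "m \<le> m'"
  shows "Qprod Om L k m' = embed_mat (m' * L) 0 (m * L) (Qprod Om L k m)"
  using assms(1)
proof (induct k)
  case 0
  show ?case using assms(2) by (simp add: embed_mat_one[symmetric])
next
  case (Suc k)
  have "k * L + 2 * L \<le> m * L"
    using Suc(2) mult_le_mono1[of "Suc k + 1" m L] by (simp add: algebra_simps)
  then have "Qembed Om L (Suc k) m' = embed_mat (m' * L) 0 (m * L) (Qembed Om L (Suc k) m)"
    by (simp add: Qembed_eq_embed_mat embed_mat_embed_mat)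
  then show ?case
    using Suc assms(2) by (simp add: embed_mat_mult[OF Qembed_carrier Qprod_carrier])
qed

section \<open>Frobenius norm and least squares\<close>

definition fro_sq :: "complex mat \<Rightarrow> real" where
  "fro_sq M = (\<Sum>i<dim_row M. \<Sum>k<dim_col M. (cmod (M $$ (i,k)))\<^sup>2)"

lemma fro_norm_le_iff: "fro_norm A \<le> fro_norm B \<longleftrightarrow> fro_sq A \<le> fro_sq B"
  unfolding fro_norm_def fro_sq_def by simp

lemma fro_sq_nonneg: "0 \<le> fro_sq M"
  unfolding fro_sq_def by (intro sum_nonneg) auto

lemma fro_sq_eq_0_iff:
  assumes "M \<in> carrier_mat nr nc"
  shows "fro_sq M = 0 \<longleftrightarrow> M = 0\<^sub>m nr nc"
proof -
  have "fro_sq M = 0 \<longleftrightarrow> (\<forall>i<nr. \<forall>k<nc. M $$ (i,k) = 0)"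
    using assms unfolding fro_sq_def by (simp add: sum_nonneg_eq_0_iff sum_nonneg, blast)
  then show ?thesis using assms by (auto intro!: eq_matI)
qed

lemma fro_sq_uminus: "fro_sq (- M) = fro_sq M"
  unfolding fro_sq_def by simp

lemma fro_sq_split_rows:
  assumes "M \<in> carrier_mat (p + l) nc"
  shows "fro_sq M = fro_sq (blk M 0 0 p nc) + fro_sq (blk M p 0 l nc)"
  using assms unfolding fro_sq_def by (simp add: sum_lessThan_add_split)

lemma fro_sq_eq_trace:
  "complex_of_real (fro_sq M) = (\<Sum>k<dim_col M. (mat_adjoint M * M) $$ (k,k))"
proof -
  have "complex_of_real (fro_sq M) = (\<Sum>k<dim_col M. \<Sum>i<dim_row M. complex_of_real ((cmod (M $$ (i,k)))\<^sup>2))"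
    unfolding fro_sq_def by (simp add: sum.swap[of _ "{..<dim_row M}"])
  also have "\<dots> = (\<Sum>k<dim_col M. \<Sum>i<dim_row M. cnj (M $$ (i,k)) * M $$ (i,k))"
    by (intro sum.cong refl) (simp only: complex_norm_square mult.commute)
  also have "\<dots> = (\<Sum>k<dim_col M. (mat_adjoint M * M) $$ (k,k))"
    by (intro sum.cong refl) (simp add: scalar_prod_def atLeast0LessThan)
  finally show ?thesis .
qed

lemma fro_sq_isometry_mult:
  assumes Q: "Q \<in> carrier_mat n n" and QQ: "mat_adjoint Q * Q = 1\<^sub>m n" and X: "X \<in> carrier_mat n nc"
  shows "fro_sq (Q * X) = fro_sq X"
proof -
  have QH: "mat_adjoint Q \<in> carrier_mat n n" and XH: "mat_adjoint X \<in> carrier_mat nc n"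
    using Q X by auto
  have "mat_adjoint (Q * X) * (Q * X) = mat_adjoint X * (mat_adjoint Q * (Q * X))"
    unfolding mat_adjoint_mult[OF Q X] using Q X by (intro assoc_mult_mat[OF XH QH]) auto
  also have "mat_adjoint Q * (Q * X) = X"
    using assoc_mult_mat[OF QH Q X] QQ X by simp
  finally have "mat_adjoint (Q * X) * (Q * X) = mat_adjoint X * X" .
  then have "complex_of_real (fro_sq (Q * X)) = complex_of_real (fro_sq X)"
    unfolding fro_sq_eq_trace using Q X by simp
  then show ?thesis by simp
qed

lemma rotated_residual_blocks:
  fixes Q :: "'a::comm_ring_1 mat"
  assumes Q: "Q \<in> carrier_mat (p + l) (p + l)"
    and H: "H \<in> carrier_mat (p + l) p" and F: "F \<in> carrier_mat (p + l) nc"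
    and lower: "blk (Q * H) p 0 l p = 0\<^sub>m l p" and Y: "Y \<in> carrier_mat p nc"
  shows "blk (Q * (H * Y - F)) 0 0 p nc = blk (Q * H) 0 0 p p * Y - blk (Q * F) 0 0 p nc"
    and "blk (Q * (H * Y - F)) p 0 l nc = - blk (Q * F) p 0 l nc"
proof -
  have QH: "Q * H \<in> carrier_mat (p + l) p" and QF: "Q * F \<in> carrier_mat (p + l) nc"
    using Q H F by auto
  have QHY: "Q * H * Y \<in> carrier_mat (p + l) nc" using QH Y by simp
  have eq: "Q * (H * Y - F) = Q * H * Y - Q * F"
    using mult_minus_distrib_mat[OF Q mult_carrier_mat[OF H Y] F] assoc_mult_mat[OF Q H Y] by simp
  have "blk (Q * H * Y) r 0 k nc = blk (Q * H) r 0 k p * Y" if "r + k \<le> p + l" for r k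
    using blk_mult[OF QH Y that] blk_whole[OF Y] by simp
  moreover have "blk (Q * H * Y - Q * F) r 0 k nc = blk (Q * H * Y) r 0 k nc - blk (Q * F) r 0 k nc"
    if "r + k \<le> p + l" for r k
    using that by (intro blk_minus[OF QHY QF]) auto
  ultimately show "blk (Q * (H * Y - F)) 0 0 p nc = blk (Q * H) 0 0 p p * Y - blk (Q * F) 0 0 p nc"
    and "blk (Q * (H * Y - F)) p 0 l nc = - blk (Q * F) p 0 l nc"
    unfolding eq using lower Y by auto
qed

text \<open>The top block of the rotated residual can be made zero while its bottom block does not
  depend on \<open>Y\<close>; since \<open>Q\<close> preserves the Frobenius norm, a minimizer has zero top block.\<close>

lemma least_squares_rotated_residual_top_zero:
  assumes Q: "Q \<in> carrier_mat (p + l) (p + l)" and QQ: "mat_adjoint Q * Q = 1\<^sub>m (p + l)"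
    and H: "H \<in> carrier_mat (p + l) p" and F: "F \<in> carrier_mat (p + l) nc"
    and det_R: "det (blk (Q * H) 0 0 p p) \<noteq> 0" and lower: "blk (Q * H) p 0 l p = 0\<^sub>m l p"
    and Y: "Y \<in> carrier_mat p nc"
    and min: "\<forall>Y' \<in> carrier_mat p nc. fro_norm (H * Y - F) \<le> fro_norm (H * Y' - F)"
  shows "blk (Q * (H * Y - F)) 0 0 p nc = 0\<^sub>m p nc"
proof -
  define R where "R = blk (Q * H) 0 0 p p"
  define G where "G = blk (Q * F) 0 0 p nc"
  note blocks = rotated_residual_blocks[OF Q H F lower, folded R_def G_def]
  obtain R' where R': "R' \<in> carrier_mat p p" "R * R' = 1\<^sub>m p"
    using det_nonzero_right_inverse[of R p] det_R unfolding R_def by auto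
  define Y0 where "Y0 = R' * G"
  have Y0: "Y0 \<in> carrier_mat p nc" unfolding Y0_def G_def using R' by auto
  have "R * Y0 = R * R' * G"
    unfolding Y0_def by (rule assoc_mult_mat[symmetric]) (use R' in \<open>auto simp: R_def G_def\<close>)
  then have top0: "blk (Q * (H * Y0 - F)) 0 0 p nc = 0\<^sub>m p nc"
    using blocks(1)[OF Y0] R' by (simp add: G_def)
  have fro: "fro_sq (H * Y' - F)
      = fro_sq (blk (Q * (H * Y' - F)) 0 0 p nc) + fro_sq (blk (Q * F) p 0 l nc)"
    if Y': "Y' \<in> carrier_mat p nc" for Y'
  proof -
    have Z: "H * Y' - F \<in> carrier_mat (p + l) nc" using H Y' F by auto
    have "fro_sq (H * Y' - F) = fro_sq (Q * (H * Y' - F))"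
      by (rule fro_sq_isometry_mult[symmetric, OF Q QQ Z])
    also have "\<dots> = fro_sq (blk (Q * (H * Y' - F)) 0 0 p nc) + fro_sq (blk (Q * (H * Y' - F)) p 0 l nc)"
      by (rule fro_sq_split_rows) (use Q Z in auto)
    finally show ?thesis using blocks(2)[OF Y'] by (simp add: fro_sq_uminus)
  qed
  have "fro_sq (H * Y - F) \<le> fro_sq (H * Y0 - F)"
    using min Y0 unfolding fro_norm_le_iff by blast
  then have "fro_sq (blk (Q * (H * Y - F)) 0 0 p nc) \<le> 0"
    unfolding fro[OF Y] fro[OF Y0] top0 by (simp add: fro_sq_def)
  then show ?thesis
    using fro_sq_nonneg fro_sq_eq_0_iff[OF blk_carrier] by (metis order.antisym)
qed

lemma mrank_least_squares_residual_le:
  assumes Q: "Q \<in> carrier_mat (p + l) (p + l)" and QQ: "mat_adjoint Q * Q = 1\<^sub>m (p + l)"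
    and H: "H \<in> carrier_mat (p + l) p" and F: "F \<in> carrier_mat (p + l) nc"
    and det_R: "det (blk (Q * H) 0 0 p p) \<noteq> 0" and lower: "blk (Q * H) p 0 l p = 0\<^sub>m l p"
    and Y: "Y \<in> carrier_mat p nc"
    and min: "\<forall>Y' \<in> carrier_mat p nc. fro_norm (H * Y - F) \<le> fro_norm (H * Y' - F)"
  shows "mrank (F - H * Y) \<le> mrank (blk (Q * F) p 0 l nc)"
proof -
  let ?I = "1\<^sub>m (p + l) :: complex mat"
  define Z where "Z = Q * (H * Y - F)"
  have top: "blk Z 0 0 p nc = 0\<^sub>m p nc"
    unfolding Z_def by (rule least_squares_rotated_residual_top_zero[OF assms])
  have bottom: "blk Z p 0 l nc = - blk (Q * F) p 0 l nc"
    unfolding Z_def by (rule rotated_residual_blocks(2)[OF Q H F lower Y])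
  have D: "H * Y - F \<in> carrier_mat (p + l) nc" and Z: "Z \<in> carrier_mat (p + l) nc"
    using H Y F Q unfolding Z_def by auto
  have Z_factor: "Z = blk ?I 0 p (p + l) l * blk Z p 0 l nc"
    using mult_eq_blk_split[OF one_carrier_mat Z] top Z
    by (simp add: left_add_zero_mat[OF mult_carrier_mat[OF blk_carrier blk_carrier]])
  have "H * Y - F = mat_adjoint Q * Z"
    unfolding Z_def using assoc_mult_mat[OF mat_adjoint_carrier_mat[OF Q] Q D] QQ left_mult_one_mat[OF D]
    by simp
  moreover have "F - H * Y = - (H * Y - F)" using H Y F by (intro eq_matI) simp_all
  ultimately have "mrank (F - H * Y) = mrank (mat_adjoint Q * Z)"
    using mrank_uminus[OF D] by simp
  also have "\<dots> = mrank (mat_adjoint Q * (blk ?I 0 p (p + l) l * blk Z p 0 l nc))"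
    using arg_cong[OF Z_factor, of "\<lambda>X. mrank (mat_adjoint Q * X)"] .
  also have "\<dots> \<le> mrank (blk Z p 0 l nc)"
    using mrank_mult_le_right[OF mat_adjoint_carrier_mat[OF Q] mult_carrier_mat[OF blk_carrier blk_carrier]]
      mrank_mult_le_right[OF blk_carrier blk_carrier] by (rule order.trans)
  also have "\<dots> = mrank (blk (Q * F) p 0 l nc)"
    unfolding bottom by (rule mrank_uminus[OF blk_carrier])
  finally show ?thesis .
qed

section \<open>Block Arnoldi and block QR\<close>

lemma block_arnoldi_mult:
  fixes A :: "'a::comm_ring_1 mat"
  assumes A: "A \<in> carrier_mat n n" and W: "W \<in> carrier_mat n (m + l)"
    and Hbar: "Hbar \<in> carrier_mat (m + l) m"
    and arnoldi: "A * blk W 0 0 n m = W * Hbar"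
    and "p \<le> m" and tail: "blk Hbar m 0 l p = 0\<^sub>m l p"
  shows "A * blk W 0 0 n p = blk W 0 0 n m * blk Hbar 0 0 m p"
proof -
  have Wm: "blk W 0 0 n m \<in> carrier_mat n m" by simp
  have "A * blk W 0 0 n p = blk (A * blk W 0 0 n m) 0 0 n p"
    using blk_mult[OF A Wm, of 0 n 0 p] \<open>p \<le> m\<close> by (simp add: blk_whole[OF A] blk_blk)
  also have "\<dots> = W * blk Hbar 0 0 (m + l) p"
    unfolding arnoldi using blk_mult[OF W Hbar, of 0 n 0 p] \<open>p \<le> m\<close> W by (simp add: blk_whole[OF W])
  also have "\<dots> = blk W 0 0 n m * blk Hbar 0 0 m p"
    using mult_eq_blk_if_tail_rows_zero[OF W blk_carrier] tail \<open>p \<le> m\<close> by (simp add: blk_blk)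
  finally show ?thesis .
qed

lemma block_arnoldi_residual:
  fixes A :: "'a::comm_ring_1 mat"
  assumes A: "A \<in> carrier_mat n n" and W: "W \<in> carrier_mat n (m + l)"
    and Hbar: "Hbar \<in> carrier_mat (m + l) m"
    and arnoldi: "A * blk W 0 0 n m = W * Hbar"
    and "p \<le> m" and tail: "blk Hbar m 0 l p = 0\<^sub>m l p"
    and B: "B \<in> carrier_mat n nc" and X0: "X0 \<in> carrier_mat n nc"
    and "k \<le> m" and S0: "S0 \<in> carrier_mat k nc" and res0: "B - A * X0 = blk W 0 0 n k * S0"
    and Y: "Y \<in> carrier_mat p nc"
  shows "B - A * (X0 + blk W 0 0 n p * Y)
    = blk W 0 0 n m * (blk (1\<^sub>m m) 0 0 m k * S0 - blk Hbar 0 0 m p * Y)"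
proof -
  define Wm where "Wm = blk W 0 0 n m"
  define E :: "'a mat" where "E = blk (1\<^sub>m m) 0 0 m k"
  define H1 where "H1 = blk Hbar 0 0 m p"
  have Wm: "Wm \<in> carrier_mat n m" and E: "E \<in> carrier_mat m k" and H1: "H1 \<in> carrier_mat m p"
    unfolding Wm_def E_def H1_def by auto
  have "blk W 0 0 n k = blk (Wm * 1\<^sub>m m) 0 0 n k"
    using \<open>k \<le> m\<close> right_mult_one_mat[OF Wm] by (simp add: Wm_def blk_blk)
  also have "\<dots> = Wm * E"
    using blk_mult[OF Wm one_carrier_mat, of 0 n 0 k] \<open>k \<le> m\<close> by (simp add: blk_whole[OF Wm] E_def)
  finally have V1: "blk W 0 0 n k = Wm * E" .
  have AWp: "A * blk W 0 0 n p = Wm * H1"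
    unfolding Wm_def H1_def by (rule block_arnoldi_mult[OF A W Hbar arnoldi \<open>p \<le> m\<close> tail])
  have WpY: "blk W 0 0 n p * Y \<in> carrier_mat n nc" using Y by auto
  have "B - A * (X0 + blk W 0 0 n p * Y) = (B - A * X0) - A * (blk W 0 0 n p * Y)"
    unfolding mult_add_distrib_mat[OF A X0 WpY] using A B X0 WpY by (intro eq_matI) auto
  also have "\<dots> = Wm * (E * S0) - Wm * (H1 * Y)"
    unfolding res0 V1 using assoc_mult_mat[OF Wm E S0] assoc_mult_mat[OF A blk_carrier Y, symmetric]
      assoc_mult_mat[OF Wm H1 Y] by (simp add: AWp)
  also have "\<dots> = Wm * (E * S0 - H1 * Y)"
    using E S0 H1 Y by (intro mult_minus_distrib_mat[OF Wm, symmetric]) auto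
  finally show ?thesis unfolding Wm_def E_def H1_def .
qed

lemma block_hessenberg_last_block_row_zero:
  assumes L: "0 < L"
    and hess: "\<forall>i k. 1 \<le> i \<and> i \<le> j + 1 \<and> 1 \<le> k \<and> k \<le> j \<and> i > k + 1
                  \<longrightarrow> hblock Hbar L i k = 0\<^sub>m L L"
  shows "blk Hbar (j * L) 0 L ((j - 1) * L) = 0\<^sub>m L ((j - 1) * L)"
proof (rule eq_matI)
  fix a c assume "a < dim_row (0\<^sub>m L ((j - 1) * L))" "c < dim_col (0\<^sub>m L ((j - 1) * L))"
  then have a: "a < L" and c: "c < (j - 1) * L" by auto
  define k where "k = c div L + 1"
  have "c div L < j - 1" using c L by (simp add: div_less_iff_less_mult)
  then have "1 \<le> j + 1 \<and> j + 1 \<le> j + 1 \<and> 1 \<le> k \<and> k \<le> j \<and> j + 1 > k + 1"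
    unfolding k_def by auto
  then have "hblock Hbar L (j + 1) k = 0\<^sub>m L L" using hess by blast
  then have "hblock Hbar L (j + 1) k $$ (a, c mod L) = 0" using a L by simp
  then show "blk Hbar (j * L) 0 L ((j - 1) * L) $$ (a, c) = 0\<^sub>m L ((j - 1) * L) $$ (a, c)"
    using a c L unfolding hblock_def k_def by simp
qed auto

lemma unitary_top_block_eq:
  fixes Om :: "complex mat"
  assumes Om: "Om \<in> carrier_mat (a + b) (a + b)" and OO: "mat_adjoint Om * Om = 1\<^sub>m (a + b)"
    and S: "S \<in> carrier_mat (a + b) c" and lower: "blk (Om * S) a 0 b c = 0\<^sub>m b c"
  shows "blk S 0 0 a c = mat_adjoint (blk Om 0 0 a a) * blk (Om * S) 0 0 a c"
proof -
  have OmH: "mat_adjoint Om \<in> carrier_mat (a + b) (a + b)" and OmS: "Om * S \<in> carrier_mat (a + b) c"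
    using mat_adjoint_carrier_mat[OF Om] Om S by auto
  have "S = mat_adjoint Om * (Om * S)"
    using assoc_mult_mat[OF OmH Om S] OO S by simp
  then have "blk S 0 0 a c = blk (mat_adjoint Om) 0 0 a (a + b) * (Om * S)"
    using blk_mult[OF OmH OmS, of 0 a 0 c] blk_whole[OF OmS] by simp
  also have "\<dots> = blk (blk (mat_adjoint Om) 0 0 a (a + b)) 0 0 a a * blk (Om * S) 0 0 a c"
    by (rule mult_eq_blk_if_tail_rows_zero[OF blk_carrier OmS lower])
  also have "blk (blk (mat_adjoint Om) 0 0 a (a + b)) 0 0 a a = mat_adjoint (blk Om 0 0 a a)"
    using Om by (simp add: blk_blk blk_mat_adjoint)
  finally show ?thesis .
qed

lemma det_blk_upper_triangular_nonzero:
  fixes T :: "'a::field mat"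
  assumes ut: "upper_triangular T" and T: "T \<in> carrier_mat n n" and det: "det T \<noteq> 0"
    and "r + k \<le> n"
  shows "det (blk T r r k k) \<noteq> 0"
proof -
  have "(\<Prod>i = 0..<n. T $$ (i,i)) \<noteq> 0"
    using det det_upper_triangular[OF ut T] T by (simp add: prod_list_diag_prod)
  then have diag: "T $$ (i,i) \<noteq> 0" if "i < n" for i using that by auto
  have "upper_triangular (blk T r r k k)"
    using ut T \<open>r + k \<le> n\<close> by (intro upper_triangularI) (auto intro!: upper_triangularD[OF ut])
  then have "det (blk T r r k k) = (\<Prod>i = 0..<k. T $$ (r + i, r + i))"
    using det_upper_triangular[OF _ blk_carrier] by (simp add: prod_list_diag_prod)
  then show ?thesis using diag \<open>r + k \<le> n\<close> by auto
qed

lemma Qprod_prev_isometry: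
  assumes "2 \<le> j"
    and Om_unitary: "\<forall>i. 1 \<le> i \<and> i \<le> j \<longrightarrow> Om i \<in> carrier_mat (2 * L) (2 * L) \<and> unitary_mat (Om i)"
  shows "mat_adjoint (Qprod Om L (j - 1) j) * Qprod Om L (j - 1) j = 1\<^sub>m (j * L)"
  by (rule Qprod_isometry) (use assms in \<open>auto simp: unitary_mat_def\<close>)

lemma block_QR_prev_step:
  assumes j: "2 \<le> j"
    and QR: "\<forall>k. 1 \<le> k \<and> k \<le> j \<longrightarrow>
              (let P = Qprod Om L k (k + 1) * blk Hbar 0 0 ((k + 1) * L) (k * L)
               in upper_triangular (blk P 0 0 (k * L) (k * L))
                  \<and> det (blk P 0 0 (k * L) (k * L)) \<noteq> 0
                  \<and> blk P (k * L) 0 L (k * L) = 0\<^sub>m L (k * L))"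
  defines "P \<equiv> Qprod Om L (j - 1) j * blk Hbar 0 0 (j * L) ((j - 1) * L)"
  shows "det (blk P 0 0 ((j - 1) * L) ((j - 1) * L)) \<noteq> 0"
    and "blk P ((j - 1) * L) 0 L ((j - 1) * L) = 0\<^sub>m L ((j - 1) * L)"
proof -
  have "j - 1 + 1 = j" using j by simp
  then show "det (blk P 0 0 ((j - 1) * L) ((j - 1) * L)) \<noteq> 0"
    and "blk P ((j - 1) * L) 0 L ((j - 1) * L) = 0\<^sub>m L ((j - 1) * L)"
    using QR[rule_format, of "j - 1"] j unfolding P_def Let_def by auto
qed

lemma mrank_Hj_eq_add_mrank_Hhat:
  fixes Hbar :: "complex mat"
  assumes j: "2 \<le> j" and H_dim: "Hbar \<in> carrier_mat ((j + 1) * L) (j * L)"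
    and Om_unitary: "\<forall>i. 1 \<le> i \<and> i \<le> j \<longrightarrow> Om i \<in> carrier_mat (2 * L) (2 * L) \<and> unitary_mat (Om i)"
    and QR: "\<forall>k. 1 \<le> k \<and> k \<le> j \<longrightarrow>
              (let P = Qprod Om L k (k + 1) * blk Hbar 0 0 ((k + 1) * L) (k * L)
               in upper_triangular (blk P 0 0 (k * L) (k * L))
                  \<and> det (blk P 0 0 (k * L) (k * L)) \<noteq> 0
                  \<and> blk P (k * L) 0 L (k * L) = 0\<^sub>m L (k * L))"
  shows "mrank (blk Hbar 0 0 (j * L) (j * L))
    = (j - 1) * L + mrank (blk (Qprod Om L (j - 1) (j + 1) * Hbar) ((j - 1) * L) ((j - 1) * L) L L)"
proof -
  define p where "p = (j - 1) * L"
  define Q where "Q = Qprod Om L (j - 1) j"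
  define Hj where "Hj = blk Hbar 0 0 (j * L) (j * L)"
  have m: "j * L = p + L" unfolding p_def using j by (cases j) auto
  have Q: "Q \<in> carrier_mat (p + L) (p + L)" and Hj: "Hj \<in> carrier_mat (p + L) (p + L)"
    unfolding Q_def Hj_def m[symmetric] by auto
  have QQ: "mat_adjoint Q * Q = 1\<^sub>m (p + L)"
    unfolding Q_def m[symmetric] by (rule Qprod_prev_isometry[OF j Om_unitary])
  have lead: "blk (Q * Hj) r 0 k p = blk (Q * blk Hbar 0 0 (p + L) p) r 0 k p" if "r + k \<le> p + L" for r k
    using blk_mult[OF Q Hj, of r k 0 p] blk_mult[OF Q blk_carrier, of r k 0 p] that
    by (simp add: Hj_def m blk_blk)
  have Q': "Qprod Om L (j - 1) (j + 1) = embed_mat ((j + 1) * L) 0 (p + L) Q"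
    unfolding Q_def m[symmetric] by (rule Qprod_eq_embed_mat) (use j in auto)
  have "blk (Qprod Om L (j - 1) (j + 1) * Hbar) p p L L
      = blk (blk (embed_mat ((j + 1) * L) 0 (p + L) Q * Hbar) 0 0 (p + L) (p + L)) p p L L"
    unfolding Q' by (simp add: blk_blk)
  also have "blk (embed_mat ((j + 1) * L) 0 (p + L) Q * Hbar) 0 0 (p + L) (p + L) = Q * Hj"
    using blk_embed_mat_mult[OF Q, of Hbar "(j + 1) * L" "j * L" 0 0 "p + L"] H_dim
    by (simp add: Hj_def m)
  finally have Hhat: "blk (Qprod Om L (j - 1) (j + 1) * Hbar) p p L L = blk (Q * Hj) p p L L" .
  have "mrank Hj = mrank (Q * Hj)"
    by (rule mrank_mult_left_inverse[OF Q Hj mat_adjoint_carrier_mat[OF Q] QQ, symmetric])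
  also have "\<dots> = p + mrank (blk (Q * Hj) p p L L)"
    using block_QR_prev_step[OF j QR] lead[of 0 p] lead[of p L] Q Hj
    by (intro mrank_block_upper_triangular) (auto simp: Q_def p_def m[symmetric])
  finally show ?thesis unfolding p_def[symmetric] Hj_def[symmetric] Hhat .
qed

lemma det_Ctilde_nonzero:
  fixes A B X0 S0 W Hbar Y :: "complex mat"
  assumes L_pos: "L \<ge> 1" and j: "2 \<le> j"
    and A_dim: "A \<in> carrier_mat n n"
    and B_dim: "B \<in> carrier_mat n L" and X0_dim: "X0 \<in> carrier_mat n L" and S0_dim: "S0 \<in> carrier_mat L L"
    and QR0: "B - A * X0 = V1 * S0"
    and W_dim: "W \<in> carrier_mat n ((j + 1) * L)" and W_first: "blk W 0 0 n L = V1"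
    and H_dim: "Hbar \<in> carrier_mat ((j + 1) * L) (j * L)"
    and arnoldi: "A * blk W 0 0 n (j * L) = W * Hbar"
    and hess: "\<forall>i k. 1 \<le> i \<and> i \<le> j + 1 \<and> 1 \<le> k \<and> k \<le> j \<and> i > k + 1
                  \<longrightarrow> hblock Hbar L i k = 0\<^sub>m L L"
    and Om_unitary: "\<forall>i. 1 \<le> i \<and> i \<le> j \<longrightarrow> Om i \<in> carrier_mat (2 * L) (2 * L) \<and> unitary_mat (Om i)"
    and QR: "\<forall>k. 1 \<le> k \<and> k \<le> j \<longrightarrow>
              (let P = Qprod Om L k (k + 1) * blk Hbar 0 0 ((k + 1) * L) (k * L)
               in upper_triangular (blk P 0 0 (k * L) (k * L))
                  \<and> det (blk P 0 0 (k * L) (k * L)) \<noteq> 0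
                  \<and> blk P (k * L) 0 L (k * L) = 0\<^sub>m L (k * L))"
    and Y_dim: "Y \<in> carrier_mat ((j - 1) * L) L"
    and Y_min: "\<forall>Y' \<in> carrier_mat ((j - 1) * L) L.
                  fro_norm (blk Hbar 0 0 (j * L) ((j - 1) * L) * Y - Emat L j * S0)
                  \<le> fro_norm (blk Hbar 0 0 (j * L) ((j - 1) * L) * Y' - Emat L j * S0)"
    and F_rank: "mrank (B - A * (X0 + blk W 0 0 n ((j - 1) * L) * Y)) = L"
  shows "det (blk (Qprod Om L (j - 1) j * Emat L j * S0) ((j - 1) * L) 0 L L) \<noteq> 0"
proof -
  define p where "p = (j - 1) * L"
  define Q where "Q = Qprod Om L (j - 1) j"
  define E where "E = Emat L j"
  define H1 where "H1 = blk Hbar 0 0 (j * L) p"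
  have m: "j * L = p + L" unfolding p_def using j by (cases j) auto
  have Q: "Q \<in> carrier_mat (p + L) (p + L)" and E: "E \<in> carrier_mat (p + L) L"
    and H1: "H1 \<in> carrier_mat (p + L) p"
    unfolding Q_def E_def H1_def Emat_def m[symmetric] by auto
  have QQ: "mat_adjoint Q * Q = 1\<^sub>m (p + L)"
    unfolding Q_def m[symmetric] by (rule Qprod_prev_isometry[OF j Om_unitary])
  have ES0: "E * S0 \<in> carrier_mat (p + L) L" using E S0_dim by simp
  have "B - A * (X0 + blk W 0 0 n p * Y) = blk W 0 0 n (j * L) * (E * S0 - H1 * Y)"
    unfolding E_def Emat_def H1_def
  proof (rule block_arnoldi_residual[OF A_dim _ _ arnoldi])
    show "W \<in> carrier_mat n (j * L + L)" "Hbar \<in> carrier_mat (j * L + L) (j * L)"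
      using W_dim H_dim by (simp_all add: algebra_simps)
    show "blk Hbar (j * L) 0 L p = 0\<^sub>m L p"
      unfolding p_def using block_hessenberg_last_block_row_zero[OF _ hess] L_pos by simp
  qed (use m B_dim X0_dim S0_dim Y_dim QR0 W_first in \<open>auto simp: p_def\<close>)
  then have "L \<le> mrank (blk W 0 0 n (j * L) * (E * S0 - H1 * Y))"
    using F_rank unfolding p_def by simp
  also have "\<dots> \<le> mrank (E * S0 - H1 * Y)"
    by (rule mrank_mult_le_right) (use ES0 H1 Y_dim in \<open>auto simp: m p_def\<close>)
  also have "\<dots> \<le> mrank (blk (Q * (E * S0)) p 0 L L)"
  proof (rule mrank_least_squares_residual_le[OF Q QQ H1 ES0])
    show "det (blk (Q * H1) 0 0 p p) \<noteq> 0" "blk (Q * H1) p 0 L p = 0\<^sub>m L p"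
      using block_QR_prev_step[OF j QR] unfolding Q_def H1_def p_def by auto
  qed (use Y_dim Y_min in \<open>simp_all add: p_def H1_def E_def\<close>)
  also have "Q * (E * S0) = Q * E * S0" using Q E S0_dim by (simp add: assoc_mult_mat)
  finally have "mrank (blk (Q * E * S0) p 0 L L) = L"
    using mrank_le_dim_col[of "blk (Q * E * S0) p 0 L L" L L] by simp
  then show ?thesis
    unfolding Q_def E_def p_def by (rule det_nonzero_if_mrank_eq_dim_col[OF blk_carrier])
qed

lemma mrank_Hhat_eq_mrank_Q11:
  fixes Hbar :: "complex mat"
  assumes j: "2 \<le> j" and H_dim: "Hbar \<in> carrier_mat ((j + 1) * L) (j * L)"
    and Om_unitary: "\<forall>i. 1 \<le> i \<and> i \<le> j \<longrightarrow> Om i \<in> carrier_mat (2 * L) (2 * L) \<and> unitary_mat (Om i)"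
    and QR: "\<forall>k. 1 \<le> k \<and> k \<le> j \<longrightarrow>
              (let P = Qprod Om L k (k + 1) * blk Hbar 0 0 ((k + 1) * L) (k * L)
               in upper_triangular (blk P 0 0 (k * L) (k * L))
                  \<and> det (blk P 0 0 (k * L) (k * L)) \<noteq> 0
                  \<and> blk P (k * L) 0 L (k * L) = 0\<^sub>m L (k * L))"
  shows "mrank (blk (Qprod Om L (j - 1) (j + 1) * Hbar) ((j - 1) * L) ((j - 1) * L) L L)
    = mrank (blk (Om j) 0 0 L L)"
proof -
  define p where "p = (j - 1) * L"
  define K where "K = Qprod Om L (j - 1) (j + 1) * Hbar"
  define P where "P = Qprod Om L j (j + 1) * Hbar"
  define S where "S = blk K p p (L + L) L"
  have m: "j * L = p + L" and M: "(j + 1) * L = p + (L + L)" unfolding p_def using j by (cases j; simp)+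
  have "Om j \<in> carrier_mat (2 * L) (2 * L)" "unitary_mat (Om j)" using Om_unitary j by auto
  then have Om: "Om j \<in> carrier_mat (L + L) (L + L)" and OO: "mat_adjoint (Om j) * Om j = 1\<^sub>m (L + L)"
    by (auto simp: unitary_mat_def mult_2)
  have K: "K \<in> carrier_mat (p + (L + L)) (p + L)"
    unfolding K_def M[symmetric] m[symmetric] using H_dim by (rule mult_carrier_mat[OF Qprod_carrier])
  have "P = Qembed Om L j (j + 1) * K"
    unfolding P_def K_def using j assoc_mult_mat[OF Qembed_carrier Qprod_carrier H_dim]
    by (cases j) simp_all
  also have "\<dots> = embed_mat (p + (L + L)) p (L + L) (Om j) * K"
    using j by (simp only: Qembed_eq_embed_mat[of j] M p_def mult_2)
  finally have P: "P = embed_mat (p + (L + L)) p (L + L) (Om j) * K" .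
  have OmS: "Om j * S = blk P p p (L + L) L"
    unfolding P S_def by (rule blk_embed_mat_mult[OF Om K, symmetric]) auto
  have QR_j: "upper_triangular (blk P 0 0 (p + L) (p + L)) \<and> det (blk P 0 0 (p + L) (p + L)) \<noteq> 0
      \<and> blk P (p + L) 0 L (p + L) = 0\<^sub>m L (p + L)"
    using QR[rule_format, of j] j H_dim blk_whole[OF H_dim] unfolding P_def Let_def m by auto
  have lower: "blk (Om j * S) L 0 L L = 0\<^sub>m L L"
  proof -
    have "blk (Om j * S) L 0 L L = blk (blk P (p + L) 0 L (p + L)) 0 p L L"
      unfolding OmS by (simp add: blk_blk add.assoc)
    then show ?thesis using QR_j by simp
  qed
  have N: "blk (Om j * S) 0 0 L L = blk (blk P 0 0 (p + L) (p + L)) p p L L"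
    unfolding OmS by (simp add: blk_blk)
  have det_N: "det (blk (Om j * S) 0 0 L L) \<noteq> 0"
    unfolding N by (rule det_blk_upper_triangular_nonzero) (use QR_j in auto)
  have "blk K p p L L = blk S 0 0 L L" unfolding S_def by (simp add: blk_blk)
  also have "\<dots> = mat_adjoint (blk (Om j) 0 0 L L) * blk (Om j * S) 0 0 L L"
    by (rule unitary_top_block_eq[OF Om OO _ lower]) (simp add: S_def)
  finally have "mrank (blk K p p L L) = mrank (mat_adjoint (blk (Om j) 0 0 L L))"
    using mrank_mult_det_nonzero_right[OF mat_adjoint_carrier_mat[OF blk_carrier] blk_carrier det_N] by simp
  then show ?thesis unfolding K_def p_def mrank_adjoint .
qed

theorem mainTheorem4:
  fixes n L j :: nat
    and A B X0 V1 S0 W Hbar Y :: "complex mat"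
    and Om :: "nat \<Rightarrow> complex mat"
  assumes n_pos: "n \<ge> 1" and L_pos: "L \<ge> 1" and j_ge: "j \<ge> 2"
    and A_dim: "A \<in> carrier_mat n n"
    and B_dim: "B \<in> carrier_mat n L" and X0_dim: "X0 \<in> carrier_mat n L"
    and V1_dim: "V1 \<in> carrier_mat n L" and S0_dim: "S0 \<in> carrier_mat L L"
    and QR0: "B - A * X0 = V1 * S0"
    and V1_orth: "orthonormal_cols V1" and S0_ut: "upper_triangular S0"
    (* W = W_{j+1} = [V_1, ..., V_{j+1}] *)
    and W_dim: "W \<in> carrier_mat n ((j + 1) * L)"
    and W_orth: "orthonormal_cols W"
    and W_first: "blk W 0 0 n L = V1"
    (* block Arnoldi relation A W_j = W_{j+1} Hbar_j *)
    and H_dim: "Hbar \<in> carrier_mat ((j + 1) * L) (j * L)"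
    and arnoldi: "A * blk W 0 0 n (j * L) = W * Hbar"
    and hess: "\<forall>i k. 1 \<le> i \<and> i \<le> j + 1 \<and> 1 \<le> k \<and> k \<le> j \<and> i > k + 1
                  \<longrightarrow> hblock Hbar L i k = 0\<^sub>m L L"
    and subdiag_ut: "\<forall>k. 1 \<le> k \<and> k \<le> j \<longrightarrow> upper_triangular (hblock Hbar L (k + 1) k)"
    and H_full_rank: "mrank Hbar = j * L"
    (* block QR factorization by the unitary 2L x 2L matrices Omega_1..Omega_j *)
    and Om_unitary: "\<forall>i. 1 \<le> i \<and> i \<le> j \<longrightarrow> Om i \<in> carrier_mat (2 * L) (2 * L) \<and> unitary_mat (Om i)"
    and QR: "\<forall>k. 1 \<le> k \<and> k \<le> j \<longrightarrow>
              (let P = Qprod Om L k (k + 1) * blk Hbar 0 0 ((k + 1) * L) (k * L)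
               in upper_triangular (blk P 0 0 (k * L) (k * L))
                  \<and> det (blk P 0 0 (k * L) (k * L)) \<noteq> 0
                  \<and> blk P (k * L) 0 L (k * L) = 0\<^sub>m L (k * L))"
    (* Y = Y_{j-1}^(G), the block GMRES least squares solution *)
    and Y_dim: "Y \<in> carrier_mat ((j - 1) * L) L"
    and Y_min: "\<forall>Y' \<in> carrier_mat ((j - 1) * L) L.
                  fro_norm (blk Hbar 0 0 (j * L) ((j - 1) * L) * Y - Emat L j * S0)
                  \<le> fro_norm (blk Hbar 0 0 (j * L) ((j - 1) * L) * Y' - Emat L j * S0)"
    (* the residual F_{j-1}^(G) = B - A X_{j-1}^(G) has rank L *)
    and F_rank: "mrank (B - A * (X0 + blk W 0 0 n ((j - 1) * L) * Y)) = L"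
  shows "let Hhat = blk (Qprod Om L (j - 1) (j + 1) * Hbar) ((j - 1) * L) ((j - 1) * L) L L;
             Ctilde = blk (Qprod Om L (j - 1) j * Emat L j * S0) ((j - 1) * L) 0 L L;
             C = blk (Om j) 0 0 L L * Ctilde;
             Hj = blk Hbar 0 0 (j * L) (j * L)
         in mrank C = mrank Hhat \<and> int (mrank Hhat) = int (mrank Hj) - int ((j - 1) * L)"
proof -
  define Q11 where "Q11 = blk (Om j) 0 0 L L"
  define Ct where "Ct = blk (Qprod Om L (j - 1) j * Emat L j * S0) ((j - 1) * L) 0 L L"
  have "det Ct \<noteq> 0"
    unfolding Ct_def
    by (rule det_Ctilde_nonzero[OF L_pos j_ge A_dim B_dim X0_dim S0_dim QR0 W_dim W_first H_dim
          arnoldi hess Om_unitary QR Y_dim Y_min F_rank])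
  then have "mrank (Q11 * Ct) = mrank Q11"
    unfolding Ct_def Q11_def by (rule mrank_mult_det_nonzero_right[OF blk_carrier blk_carrier])
  then show ?thesis
    using mrank_Hhat_eq_mrank_Q11[OF j_ge H_dim Om_unitary QR]
      mrank_Hj_eq_add_mrank_Hhat[OF j_ge H_dim Om_unitary QR]
    unfolding Let_def Q11_def Ct_def by simp
qed

end
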